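(* Let $k$ be a positive integer such that $k+1$ is an odd prime. For every $\mathbf v\in N_k$ there exist $s\in\mathbb{Z}_{k+1}$ and $r\in\mathbb{Z}$ such that, working modulo $k+1$, every coordinate of $s\mathbf v+\mathbf r_k\!\left(\tfrac{r}{k+1}\right)$ lies in $\{1,\ldots,k-1\}$.
   Context: $\mathbb{Z}_{k+1}$ is the integers modulo $k+1$. $N_k:=\{\mathbf v\in\mathbb{Z}_{k+1}^k:\ \mathbf v\neq\mathbf 0 \text{ and } \mathbf v \text{ has at least one zero coordinate}\}$. For $x\in\mathbb{R}$, $\{x\}=x-\lfloor x\rfloor$ is the fractional part, and for $t\in\mathbb{R}$, $\mathbf r_k(t):=\big(\lfloor (k+1)\{t\}\rfloor,\lfloor (k+1)\{2t\}\rfloor,\ldots,\lfloor (k+1)\{kt\}\rfloor\big)\in\{0,\ldots,k\}^k$, reduced modulo $k+1$ when added to elements of $\mathbb{Z}_{k+1}^k$. *)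

theory Defs
  imports Complex_Main "HOL-Computational_Algebra.Primes"
begin

text \<open>Vectors in Z_{k+1}^k are represented as functions v :: nat => int with
  coordinates v 1, ..., v k taken as canonical residues in {0..k}, and v j = 0
  for indices outside {1..k}.\<close>

definition Zvec :: "nat \<Rightarrow> (nat \<Rightarrow> int) set" where
  "Zvec k = {v. (\<forall>j\<in>{1..k}. 0 \<le> v j \<and> v j \<le> int k) \<and> (\<forall>j. j \<notin> {1..k} \<longrightarrow> v j = 0)}"

definition Nset :: "nat \<Rightarrow> (nat \<Rightarrow> int) set" where
  "Nset k = {v \<in> Zvec k. (\<exists>j\<in>{1..k}. v j \<noteq> 0) \<and> (\<exists>j\<in>{1..k}. v j = 0)}"

definition rvec :: "nat \<Rightarrow> real \<Rightarrow> nat \<Rightarrow> int" where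
  "rvec k t j = \<lfloor>(real k + 1) * frac (real j * t)\<rfloor>"

end

(*
  Put p = k + 1. Since r_k(r/p) has coordinates j r mod p, we need s and r such that no
  s v_j + j r is congruent to 0 or -1. If for some m the residues v_j - j m are all nonzero
  and miss some c, then s = -1/c, r = m/c does the job. So assume no pair (s, r) works and let
  Z be the set of slopes v_j / j mod p. For m outside Z the p - 1 residues v_j - j m are then
  exactly the nonzero ones, so their product is (p - 1)! = -1 by Wilson; for m in Z it is 0.
  Summing prod_j (v_j - j x) over all residues x gives minus its coefficient of x^(p-1), which
  is (p - 1)! = -1 because p - 1 is even. Hence card Z = 1 mod p, contradicting
  2 <= card Z <= p - 1, the lower bound coming from a zero and a nonzero coordinate of v.
*)

theory Submission
  imports Defs "HOL-Number_Theory.Number_Theory" "HOL-Computational_Algebra.Polynomial"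
begin

lemma sum_power_units_cong_0:
  assumes p: "prime p" and e: "0 < e" "e < p - 1"
  shows "[(\<Sum>x\<in>{1..<int p}. x ^ e) = 0] (mod int p)"
proof -
  obtain g where "residue_primroot p g"
    using prime_primitive_root_exists p prime_gt_1_nat by blast
  then have cop: "coprime (int g) (int p)" and ord_g: "ord p g = p - 1"
    using p by (auto simp: residue_primroot_def totient_prime coprime_commute)
  have "\<not> [int g ^ e = 1] (mod int p)"
  proof
    assume "[int g ^ e = 1] (mod int p)"
    then have "[g ^ e = 1] (mod p)"
      by (metis cong_int_iff of_nat_1 of_nat_power)
    then have "p - 1 dvd e"
      unfolding ord_divides ord_g .
    with e show False
      using nat_dvd_not_less[of e "p - 1"] by simp
  qed
  then have not_dvd: "\<not> int p dvd int g ^ e - 1"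
    using cong_iff_dvd_diff cong_sym by blast
  define S where "S = (\<Sum>x\<in>{1..<int p}. x ^ e)"
  have "S = (\<Sum>x\<in>{1..<int p}. (int g * x mod int p) ^ e)"
    unfolding S_def using bij_betw_int_remainders_mult[OF cop]
    by (rule sum.reindex_bij_betw[symmetric])
  also have "[\<dots> = (\<Sum>x\<in>{1..<int p}. (int g * x) ^ e)] (mod int p)"
    by (intro cong_sum cong_pow) (simp add: cong_def)
  also have "(\<Sum>x\<in>{1..<int p}. (int g * x) ^ e) = int g ^ e * S"
    by (simp add: S_def power_mult_distrib sum_distrib_left)
  finally have "[int g ^ e * S = S] (mod int p)"
    by (rule cong_sym)
  then have "int p dvd (int g ^ e - 1) * S"
    by (simp add: cong_iff_dvd_diff algebra_simps)
  with not_dvd p show ?thesis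
    by (simp add: S_def cong_0_iff prime_dvd_mult_iff)
qed

lemma sum_power_residues_cong:
  assumes p: "prime p" and i: "i \<le> p - 1"
  shows "[(\<Sum>m\<in>{0..<int p}. m ^ i) = (if i = p - 1 then -1 else 0)] (mod int p)"
proof -
  have p1: "p > 1"
    using p prime_gt_1_nat by blast
  have units: "{0..<int p} = insert 0 {1..<int p}"
    using p1 by auto
  consider "i = 0" | "i = p - 1" | "0 < i" "i < p - 1"
    using i p1 by linarith
  then show ?thesis
  proof cases
    case 1
    then show ?thesis
      using p1 by (simp add: cong_def)
  next
    case 2
    have "(\<Sum>m\<in>{0..<int p}. m ^ i) = (\<Sum>m\<in>{1..<int p}. m ^ (p - 1))"
      using 2 p1 by (simp add: units)
    also have "[\<dots> = (\<Sum>m\<in>{1..<int p}. 1)] (mod int p)"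
    proof (rule cong_sum)
      fix m assume "m \<in> {1..<int p}"
      then obtain n where n: "m = int n" "0 < n" "n < p"
        by (metis atLeastLessThan_iff int_one_le_iff_zero_less of_nat_less_iff zero_less_imp_eq_int)
      then have "[n ^ (p - 1) = 1] (mod p)"
        using fermat_theorem p nat_dvd_not_less by blast
      then show "[m ^ (p - 1) = 1] (mod int p)"
        unfolding n(1) by (metis cong_int_iff of_nat_1 of_nat_power)
    qed
    also have "(\<Sum>m\<in>{1..<int p}. 1) = int p - 1"
      using p1 by simp
    also have "[int p - 1 = -1] (mod int p)"
      by (simp add: cong_def)
    finally show ?thesis
      using 2 by simp
  next
    case 3
    then show ?thesis
      using sum_power_units_cong_0[OF p 3] by (simp add: units power_0_left)
  qed
qed

lemma sum_poly_residues_cong: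
  fixes P :: "int poly"
  assumes p: "prime p" and deg: "degree P \<le> p - 1"
  shows "[(\<Sum>m\<in>{0..<int p}. poly P m) = - coeff P (p - 1)] (mod int p)"
proof -
  have "poly P x = (\<Sum>i\<le>p - 1. coeff P i * x ^ i)" for x
    by (rule poly_altdef[THEN trans], rule sum.mono_neutral_left)
      (use deg in \<open>auto simp: coeff_eq_0\<close>)
  then have "(\<Sum>m\<in>{0..<int p}. poly P m) =
      (\<Sum>i\<le>p - 1. coeff P i * (\<Sum>m\<in>{0..<int p}. m ^ i))"
    by (simp add: sum_distrib_left sum.swap[of _ "{0..<int p}"])
  also have "[\<dots> = (\<Sum>i\<le>p - 1. coeff P i * (if i = p - 1 then -1 else 0))] (mod int p)"
    by (intro cong_sum cong_scalar_left sum_power_residues_cong[OF p]) simp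
  also have "(\<Sum>i\<le>p - 1. coeff P i * (if i = p - 1 then -1 else 0)) = - coeff P (p - 1)"
    by (simp add: if_distrib[of "\<lambda>x. coeff P _ * x"] sum.delta cong: if_cong)
  finally show ?thesis .
qed

lemma fact_eq_prod_int:
  "fact n = (\<Prod>x\<in>{1..int n}. x)"
proof -
  have "(\<Prod>x\<in>{int 1..int n}. x) = (\<Prod>x\<in>{1..n}. int x)"
    by (subst prod.atLeast_int_atMost_int_shift) (simp add: comp_def)
  then show ?thesis
    by (simp add: fact_prod)
qed

lemma prod_cong_minus_1_if_onto_units:
  fixes f :: "'a \<Rightarrow> int"
  assumes p: "prime p" and A: "finite A" "card A = p - 1"
    and onto: "\<forall>c\<in>{1..<int p}. \<exists>x\<in>A. [f x = c] (mod int p)"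
  shows "[(\<Prod>x\<in>A. f x) = -1] (mod int p)"
proof -
  define h where "h x = f x mod int p" for x
  have "{1..<int p} \<subseteq> h ` A"
  proof
    fix c assume c: "c \<in> {1..<int p}"
    with onto obtain x where "x \<in> A" "[f x = c] (mod int p)"
      by blast
    with c show "c \<in> h ` A"
      by (force simp: h_def cong_def)
  qed
  moreover have "card (h ` A) \<le> card {1..<int p}"
    using A card_image_le[of A h] by simp
  ultimately have img: "h ` A = {1..<int p}"
    using A by (metis card_seteq finite_imageI)
  then have "inj_on h A"
    using A by (intro eq_card_imp_inj_on) simp_all
  have "[(\<Prod>x\<in>A. f x) = (\<Prod>x\<in>A. h x)] (mod int p)"
    by (intro cong_prod) (simp add: h_def cong_def)
  also have "(\<Prod>x\<in>A. h x) = (\<Prod>c\<in>{1..<int p}. c)"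
    using prod.reindex[OF \<open>inj_on h A\<close>, of id] img by simp
  also have "\<dots> = (\<Prod>c\<in>{1..int (p - 1)}. c)"
    using prime_gt_0_nat[OF p] by (intro prod.cong) auto
  also have "\<dots> = fact (p - 1)"
    by (rule fact_eq_prod_int[symmetric])
  also have "[\<dots> = -1] (mod int p)"
    using wilson_theorem[OF p] by simp
  finally show ?thesis .
qed

lemma coprime_int_less_prime:
  fixes c :: int
  assumes "prime p" "0 < c" "c < int p"
  shows "coprime c (int p)"
  using assms by (metis prime_imp_coprime coprime_commute prime_nat_int_transfer zdvd_not_zless)

lemma affine_avoiding_0_and_minus_1_by_rescaling:
  fixes n c m :: int and v u :: "'a \<Rightarrow> int"
  assumes n: "n > 0" and c: "coprime c n"
    and avoid: "\<forall>j\<in>J. \<not> [v j - u j * m = 0] (mod n) \<and> \<not> [v j - u j * m = c] (mod n)"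
  shows "\<exists>s\<in>{0..<n}. \<exists>r. \<forall>j\<in>J.
           \<not> [s * v j + u j * r = 0] (mod n) \<and> \<not> [s * v j + u j * r = -1] (mod n)"
proof -
  obtain c' where c': "[c * c' = 1] (mod n)"
    using c cong_solve_coprime_int by blast
  define s where "s = - c' mod n"
  have rescale: "[c * (s * v j + u j * (m * c')) = - (v j - u j * m)] (mod n)" for j
  proof -
    have "[c * (s * v j + u j * (m * c')) = c * (- c' * v j + u j * (m * c'))] (mod n)"
      by (intro cong_mult cong_add cong_refl) (simp add: s_def cong_def)
    also have "c * (- c' * v j + u j * (m * c')) = (c * c') * - (v j - u j * m)"
      by (simp add: algebra_simps)
    also have "[\<dots> = 1 * - (v j - u j * m)] (mod n)"
      by (intro cong_mult c' cong_refl)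
    finally show ?thesis by simp
  qed
  have "\<not> [s * v j + u j * (m * c') = 0] (mod n) \<and> \<not> [s * v j + u j * (m * c') = -1] (mod n)"
    if "j \<in> J" for j
  proof (intro conjI notI)
    assume "[s * v j + u j * (m * c') = 0] (mod n)"
    then have "[- (v j - u j * m) = c * 0] (mod n)"
      using rescale cong_scalar_left cong_sym cong_trans by metis
    then show False
      using avoid that cong_minus_minus_iff by fastforce
  next
    assume "[s * v j + u j * (m * c') = -1] (mod n)"
    then have "[- (v j - u j * m) = c * -1] (mod n)"
      using rescale cong_scalar_left cong_sym cong_trans by metis
    then show False
      using avoid that cong_minus_minus_iff by fastforce
  qed
  moreover have "s \<in> {0..<n}"
    using n by (simp add: s_def)
  ultimately show ?thesis
    by blast
qed

definition slope :: "int \<Rightarrow> (nat \<Rightarrow> int) \<Rightarrow> nat \<Rightarrow> int" where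
  "slope n v j = v j * modular_inverse n (int j) mod n"

lemma cong_iff_eq_slope:
  fixes n m :: int
  assumes j: "coprime (int j) n" and m: "0 \<le> m" "m < n"
  shows "[v j = int j * m] (mod n) \<longleftrightarrow> m = slope n v j"
proof -
  define i where "i = modular_inverse n (int j)"
  have i: "[int j * i = 1] (mod n)"
    unfolding i_def using j by (rule cong_modular_inverse1)
  have "[v j = int j * m] (mod n) \<longleftrightarrow> [v j * i = m] (mod n)"
  proof
    assume "[v j = int j * m] (mod n)"
    then have "[v j * i = int j * m * i] (mod n)"
      by (rule cong_mult[OF _ cong_refl])
    also have "int j * m * i = (int j * i) * m"
      by (simp add: ac_simps)
    also have "[\<dots> = 1 * m] (mod n)"
      by (rule cong_mult[OF i cong_refl])
    finally show "[v j * i = m] (mod n)"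
      by simp
  next
    assume "[v j * i = m] (mod n)"
    then have "[int j * (v j * i) = int j * m] (mod n)"
      by (rule cong_mult[OF cong_refl])
    moreover have "int j * (v j * i) = (int j * i) * v j"
      by (simp add: ac_simps)
    moreover have "[\<dots> = 1 * v j] (mod n)"
      by (rule cong_mult[OF i cong_refl])
    ultimately show "[v j = int j * m] (mod n)"
      by (metis cong_sym cong_trans mult_1)
  qed
  also have "\<dots> \<longleftrightarrow> m = slope n v j"
    using m by (auto simp: cong_def slope_def i_def)
  finally show ?thesis .
qed

lemma slope_bounds:
  "n > 0 \<Longrightarrow> 0 \<le> slope n v j \<and> slope n v j < n"
  by (simp add: slope_def)

lemma sum_prod_linear_forms_cong_1:
  fixes v :: "nat \<Rightarrow> int"
  assumes p: "prime p" and odd: "odd p"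
  shows "[(\<Sum>m\<in>{0..<int p}. \<Prod>j\<in>{1..<p}. v j - int j * m) = 1] (mod int p)"
proof -
  define Q where "Q = (\<Prod>j\<in>{1..<p}. [:v j, - int j:])"
  have poly_Q: "poly Q m = (\<Prod>j\<in>{1..<p}. v j - int j * m)" for m
    by (simp add: Q_def poly_prod algebra_simps)
  have deg_Q: "degree Q = p - 1"
    unfolding Q_def by (subst degree_prod_eq_sum_degree) auto
  have "coeff Q (p - 1) = (\<Prod>j\<in>{1..<p}. - int j)"
    using deg_Q lead_coeff_prod[of "\<lambda>j. [:v j, - int j:]" "{1..<p}"] by (simp add: Q_def)
  also have "\<dots> = (\<Prod>j\<in>{1..<p}. (-1) * int j)"
    by simp
  also have "\<dots> = (-1) ^ (p - 1) * (\<Prod>j\<in>{1..<p}. int j)"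
    unfolding prod.distrib by simp
  also have "\<dots> = fact (p - 1)"
  proof -
    have "{1..<p} = {1..p - 1}"
      using prime_gt_0_nat[OF p] by auto
    then show ?thesis
      using odd by (simp add: fact_prod)
  qed
  finally have lead: "coeff Q (p - 1) = fact (p - 1)" .
  have "[(\<Sum>m\<in>{0..<int p}. poly Q m) = - fact (p - 1)] (mod int p)"
    using sum_poly_residues_cong[OF p, of Q] deg_Q lead by simp
  also have "[- fact (p - 1) = (1 :: int)] (mod int p)"
    using wilson_theorem[OF p] cong_minus_minus_iff by force
  finally show ?thesis
    by (simp add: poly_Q)
qed

lemma prod_linear_forms_cong_minus_1:
  fixes v :: "nat \<Rightarrow> int" and m :: int
  assumes p: "prime p"
    and nonzero: "\<forall>j\<in>{1..<p}. \<not> [v j - int j * m = 0] (mod int p)"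
    and no_avoid: "\<forall>s\<in>{0..<int p}. \<forall>r. \<exists>j\<in>{1..<p}.
                    [s * v j + int j * r = 0] (mod int p) \<or> [s * v j + int j * r = -1] (mod int p)"
  shows "[(\<Prod>j\<in>{1..<p}. v j - int j * m) = -1] (mod int p)"
proof (rule prod_cong_minus_1_if_onto_units[OF p])
  show "\<forall>c\<in>{1..<int p}. \<exists>j\<in>{1..<p}. [v j - int j * m = c] (mod int p)"
  proof
    fix c assume "c \<in> {1..<int p}"
    then have "coprime c (int p)"
      using coprime_int_less_prime[OF p] by simp
    with no_avoid have
      "\<exists>j\<in>{1..<p}. [v j - int j * m = 0] (mod int p) \<or> [v j - int j * m = c] (mod int p)"
      using affine_avoiding_0_and_minus_1_by_rescaling[of "int p" c "{1..<p}" v int m] p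
      by (meson of_nat_0_less_iff prime_gt_0_nat)
    with nonzero show "\<exists>j\<in>{1..<p}. [v j - int j * m = c] (mod int p)"
      by blast
  qed
qed simp_all

lemma cong_iff_eq_slope_prime:
  assumes p: "prime p" and j: "j \<in> {1..<p}" and m: "m \<in> {0..<int p}"
  shows "[v j = int j * m] (mod int p) \<longleftrightarrow> m = slope (int p) v j"
  using j m coprime_int_less_prime[OF p, of "int j"] by (intro cong_iff_eq_slope) auto

lemma two_le_card_slopes:
  fixes v :: "nat \<Rightarrow> int"
  assumes p: "prime p"
    and a: "a \<in> {1..<p}" "[v a = 0] (mod int p)"
    and b: "b \<in> {1..<p}" "\<not> [v b = 0] (mod int p)"
  shows "2 \<le> card (slope (int p) v ` {1..<p})"
proof -
  have zero: "0 \<in> {0..<int p}"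
    using prime_gt_0_nat[OF p] by simp
  have "slope (int p) v a = 0" "slope (int p) v b \<noteq> 0"
    using cong_iff_eq_slope_prime[OF p a(1) zero, where v = v]
      cong_iff_eq_slope_prime[OF p b(1) zero, where v = v] a(2) b(2) by simp_all
  moreover from this have "{0, slope (int p) v b} \<subseteq> slope (int p) v ` {1..<p}"
    using a(1) b(1) by (auto intro: rev_image_eqI)
  then have "card {0, slope (int p) v b} \<le> card (slope (int p) v ` {1..<p})"
    by (rule card_mono[rotated]) simp
  ultimately show ?thesis
    by simp
qed

lemma card_slopes_cong_1:
  fixes v :: "nat \<Rightarrow> int"
  assumes p: "prime p" "odd p"
    and no_avoid: "\<forall>s\<in>{0..<int p}. \<forall>r. \<exists>j\<in>{1..<p}.
                    [s * v j + int j * r = 0] (mod int p) \<or> [s * v j + int j * r = -1] (mod int p)"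
  shows "[int (card (slope (int p) v ` {1..<p})) = 1] (mod int p)"
proof -
  define Z where "Z = slope (int p) v ` {1..<p}"
  define F where "F m = (\<Prod>j\<in>{1..<p}. v j - int j * m)" for m
  have Z_sub: "Z \<subseteq> {0..<int p}"
    using slope_bounds[of "int p"] prime_gt_0_nat[OF p(1)] by (auto simp: Z_def)
  have F_cong: "[F m = (if m \<in> Z then 0 else -1)] (mod int p)" if m: "m \<in> {0..<int p}" for m
  proof (cases "m \<in> Z")
    case True
    then obtain j where j: "j \<in> {1..<p}" "[v j = int j * m] (mod int p)"
      using cong_iff_eq_slope_prime[OF p(1) _ m] by (auto simp: Z_def)
    then have "int p dvd v j - int j * m"
      by (simp add: cong_iff_dvd_diff)
    also have "\<dots> dvd F m"
      unfolding F_def using j(1) by (intro dvd_prodI) auto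
    finally show ?thesis
      using True by (simp add: cong_0_iff)
  next
    case False
    then have "\<forall>j\<in>{1..<p}. \<not> [v j - int j * m = 0] (mod int p)"
      using cong_iff_eq_slope_prime[OF p(1) _ m] by (auto simp: Z_def cong_diff_iff_cong_0)
    then show ?thesis
      using False prod_linear_forms_cong_minus_1[OF p(1) _ no_avoid] by (simp add: F_def)
  qed
  have "[1 = (\<Sum>m\<in>{0..<int p}. F m)] (mod int p)"
    using sum_prod_linear_forms_cong_1[OF p, of v] unfolding F_def by (rule cong_sym)
  also have "[(\<Sum>m\<in>{0..<int p}. F m) = (\<Sum>m\<in>{0..<int p}. if m \<in> Z then 0 else -1)]
      (mod int p)"
    using F_cong by (intro cong_sum) simp
  also have "(\<Sum>m\<in>{0..<int p}. if m \<in> Z then 0 else -1 :: int) =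
      - int (card ({0..<int p} - Z))"
    by (simp add: sum.If_cases Diff_eq)
  also have "\<dots> = int (card Z) - int p"
    using Z_sub card_mono[OF _ Z_sub] by (simp add: card_Diff_subset finite_subset of_nat_diff)
  also have "[\<dots> = int (card Z)] (mod int p)"
    by (simp add: cong_def)
  finally show ?thesis
    unfolding Z_def by (rule cong_sym)
qed

lemma exists_affine_avoiding_0_and_minus_1:
  fixes v :: "nat \<Rightarrow> int"
  assumes p: "prime p" "odd p"
    and a: "a \<in> {1..<p}" "[v a = 0] (mod int p)"
    and b: "b \<in> {1..<p}" "\<not> [v b = 0] (mod int p)"
  shows "\<exists>s\<in>{0..<int p}. \<exists>r. \<forall>j\<in>{1..<p}.
           \<not> [s * v j + int j * r = 0] (mod int p) \<and> \<not> [s * v j + int j * r = -1] (mod int p)"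
proof (rule ccontr)
  define Z where "Z = slope (int p) v ` {1..<p}"
  assume "\<not> ?thesis"
  then have "[int (card Z) = 1] (mod int p)"
    unfolding Z_def by (intro card_slopes_cong_1[OF p]) blast
  then have "int p dvd int (card Z) - 1"
    by (simp add: cong_iff_dvd_diff)
  moreover have "2 \<le> card Z"
    unfolding Z_def using two_le_card_slopes[OF p(1) a b] .
  ultimately have "int p \<le> int (card Z) - 1"
    by (intro zdvd_imp_le) auto
  moreover have "card Z \<le> p - 1"
    unfolding Z_def using card_image_le[of "{1..<p}"] by simp
  ultimately show False
    by linarith
qed

lemma floor_mult_frac_divide:
  fixes a b :: int
  assumes "b > 0"
  shows "\<lfloor>of_int b * frac (of_int a / of_int b :: real)\<rfloor> = a mod b"
proof -
  have "of_int b * frac (of_int a / of_int b :: real) = of_int (a - b * (a div b))"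
    using assms by (simp add: frac_def floor_divide_of_int_eq field_simps)
  then show ?thesis
    by (simp add: minus_mult_div_eq_mod)
qed

lemma rvec_of_int_divide:
  "rvec k (of_int r / (real k + 1)) j = (int j * r) mod (int k + 1)"
  using floor_mult_frac_divide[of "int k + 1" "int j * r"]
  by (simp add: rvec_def)

lemma mod_mem_1_to_minus_2_iff:
  fixes x n :: int
  assumes "n > 1"
  shows "x mod n \<in> {1..n - 2} \<longleftrightarrow> \<not> [x = 0] (mod n) \<and> \<not> [x = -1] (mod n)"
proof -
  have "(-1) mod n = n - 1"
    using assms by (simp add: zmod_zminus1_eq_if)
  moreover have "0 \<le> x mod n" "x mod n < n"
    using assms by simp_all
  ultimately show ?thesis
    by (auto simp: cong_def)
qed

theorem lemma4p2:
  fixes k :: nat and v :: "nat \<Rightarrow> int"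
  assumes "k > 0" and "prime (k + 1)" and "odd (k + 1)"
    and "v \<in> Nset k"
  shows "\<exists>s\<in>{0..int k}. \<exists>r::int. \<forall>j\<in>{1..k}.
           (s * v j + rvec k (real_of_int r / (real k + 1)) j) mod (int k + 1) \<in> {1..int k - 1}"
proof -
  define p where "p = k + 1"
  have p: "prime p" "odd p" "int p > 1"
    using assms(2,3) prime_gt_1_nat by (auto simp: p_def)
  have indices: "{1..k} = {1..<p}" and modulus: "int k + 1 = int p"
    and top: "int k - 1 = int p - 2"
    by (auto simp: p_def)
  obtain a b where a: "a \<in> {1..k}" "v a = 0" and b: "b \<in> {1..k}" "0 < v b" "v b \<le> int k"
    using assms(4) unfolding Nset_def Zvec_def by force
  have "a \<in> {1..<p}" "[v a = 0] (mod int p)" "b \<in> {1..<p}" "\<not> [v b = 0] (mod int p)"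
    using a b unfolding indices by (auto simp: cong_0_iff modulus[symmetric] dest: zdvd_imp_le)
  then obtain s r where s: "s \<in> {0..<int p}" and avoid: "\<forall>j\<in>{1..<p}.
      \<not> [s * v j + int j * r = 0] (mod int p) \<and> \<not> [s * v j + int j * r = -1] (mod int p)"
    using exists_affine_avoiding_0_and_minus_1[OF p(1,2)] by blast
  have "(s * v j + int j * r) mod int p \<in> {1..int p - 2}" if "j \<in> {1..<p}" for j
    unfolding mod_mem_1_to_minus_2_iff[OF p(3)] using avoid that by blast
  then have "(s * v j + int j * r mod int p) mod int p \<in> {1..int p - 2}" if "j \<in> {1..<p}" for j
    using that by (simp add: mod_add_right_eq)
  moreover have "s \<in> {0..int k}"
    using s modulus by auto
  ultimately show ?thesis
    unfolding rvec_of_int_divide modulus indices top by blast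
qed

end
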